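(* Let $P$ be a poset. Then $P$ is $3$-representable if and only if $P\models\psi_n$ for all $n\in\omega$.
   Context: A poset $P$ is $3$-representable if there is a set $X$ and an order embedding $h:P\to\wp(X)$ ($\wp(X)$ ordered by inclusion) such that whenever $S\subseteq P$ with $|S|<3$ and $\bigwedge S$ exists in $P$ then $h(\bigwedge S)=\bigcap h[S]$ (with $\bigcap\emptyset=X$), and whenever $T\subseteq P$ with $|T|<3$ and $\bigvee T$ exists in $P$ then $h(\bigvee T)=\bigcup h[T]$. The sentences $\psi_n$ are in the signature with one binary relation $\leq$: let $J(x,y,z)$ be $x\leq z\wedge y\leq z\wedge\forall w((x\leq w\wedge y\leq w)\to z\leq w)$, $M(x,y,z)$ the dual formula (z is the meet of $x,y$), $C_k(x_1,\ldots,x_k,y)=\bigvee_{i=1}^k(y=x_i)$ (false for $k=0$), $D_k=\neg C_k$, $\vec{x}_m=(x_1,\ldots,x_m)$. Define $\phi_{m0}(\vec{x}_m,y)=D_m(\vec{x}_m,y)$ and $\phi_{m(n+1)}(\vec{x}_m,y)=\forall a\forall b\forall c\Big(\big(\exists d(C_m(\vec{x}_m,d)\wedge d\leq a)\to\phi_{(m+1)n}(\vec{x}_m,a,y)\big)\wedge\big((C_m(\vec{x}_m,a)\wedge C_m(\vec{x}_m,b)\wedge M(a,b,c))\to\phi_{(m+1)n}(\vec{x}_m,c,y)\big)\wedge\big((C_m(\vec{x}_m,c)\wedge J(a,b,c))\to(\phi_{(m+1)n}(\vec{x}_m,a,y)\vee\phi_{(m+1)n}(\vec{x}_m,b,y))\big)\Big)$,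 and $\psi_n=\forall x\forall y(\neg(x\leq y)\to\phi_{1n}(x,y))$. *)

theory Defs
  imports Main
begin

definition J :: "'a::order \<Rightarrow> 'a \<Rightarrow> 'a \<Rightarrow> bool" where
  "J x y z \<longleftrightarrow> x \<le> z \<and> y \<le> z \<and> (\<forall>w. x \<le> w \<and> y \<le> w \<longrightarrow> z \<le> w)"

definition M :: "'a::order \<Rightarrow> 'a \<Rightarrow> 'a \<Rightarrow> bool" where
  "M x y z \<longleftrightarrow> z \<le> x \<and> z \<le> y \<and> (\<forall>w. w \<le> x \<and> w \<le> y \<longrightarrow> w \<le> z)"

text \<open>Semantics of phi_{m n}(x_1..x_m, y): the list xs is (x_1,...,x_m), m = length xs.\<close>
fun phi :: "nat \<Rightarrow> 'a::order list \<Rightarrow> 'a \<Rightarrow> bool" where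
  "phi 0 xs y = (y \<notin> set xs)"
| "phi (Suc n) xs y =
     (\<forall>a b c.
        ((\<exists>d. d \<in> set xs \<and> d \<le> a) \<longrightarrow> phi n (xs @ [a]) y)
      \<and> ((a \<in> set xs \<and> b \<in> set xs \<and> M a b c) \<longrightarrow> phi n (xs @ [c]) y)
      \<and> ((c \<in> set xs \<and> J a b c) \<longrightarrow> (phi n (xs @ [a]) y \<or> phi n (xs @ [b]) y)))"

definition psi :: "nat \<Rightarrow> ('a::order) itself \<Rightarrow> bool" where
  "psi n _ \<longleftrightarrow> (\<forall>x y::'a. \<not> x \<le> y \<longrightarrow> phi n [x] y)"

definition is_meet :: "'a::order set \<Rightarrow> 'a \<Rightarrow> bool" where
  "is_meet S m \<longleftrightarrow> (\<forall>s\<in>S. m \<le> s) \<and> (\<forall>w. (\<forall>s\<in>S. w \<le> s) \<longrightarrow> w \<le> m)"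

definition is_join :: "'a::order set \<Rightarrow> 'a \<Rightarrow> bool" where
  "is_join T j \<longleftrightarrow> (\<forall>t\<in>T. t \<le> j) \<and> (\<forall>w. (\<forall>t\<in>T. t \<le> w) \<longrightarrow> j \<le> w)"

definition rep3 :: "'b set \<Rightarrow> ('a::order \<Rightarrow> 'b set) \<Rightarrow> bool" where
  "rep3 X h \<longleftrightarrow>
     (\<forall>p. h p \<subseteq> X)
   \<and> (\<forall>p q. h p \<subseteq> h q \<longleftrightarrow> p \<le> q)
   \<and> (\<forall>S m. finite S \<and> card S < 3 \<and> is_meet S m \<longrightarrow> h m = X \<inter> \<Inter>(h ` S))
   \<and> (\<forall>T j. finite T \<and> card T < 3 \<and> is_join T j \<longrightarrow> h j = \<Union>(h ` T))"

end

theory Submission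
  imports Defs
begin

text \<open>
  Everything revolves around prime filters relative to the binary meets and joins that exist in P.
  The formula \<open>phi n xs y\<close> says that n rounds of the corresponding closure moves can be played
  from the list xs without reaching y, where at a join we may choose which side to add; hence it
  holds whenever xs lies in a prime filter avoiding y. For a 3-representation h, the elements whose image contains a fixed point
  form such a prime filter, which gives every \<open>psi n\<close>. Conversely, if every
  \<open>phi n [x] y\<close> holds, Zorn's lemma yields a maximal set containing x all of whose finite
  lists satisfy every \<open>phi n\<close> against y, and maximality makes it a prime filter avoiding y.
  Mapping each element to the proper prime filters containing it is then a 3-representation;
  nonemptiness and properness of the filters take care of the empty meet and join.
\<close>

lemma phi_Suc_upD: "phi (Suc n) xs y \<Longrightarrow> d \<in> set xs \<Longrightarrow> d \<le> a \<Longrightarrow> phi n (xs @ [a]) y"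
  by auto

lemma phi_Suc_meetD:
  "phi (Suc n) xs y \<Longrightarrow> a \<in> set xs \<Longrightarrow> b \<in> set xs \<Longrightarrow> M a b c \<Longrightarrow> phi n (xs @ [c]) y"
  by auto

lemma phi_Suc_joinD:
  "phi (Suc n) xs y \<Longrightarrow> c \<in> set xs \<Longrightarrow> J a b c \<Longrightarrow> phi n (xs @ [a]) y \<or> phi n (xs @ [b]) y"
  by auto

lemma phi_subset: "phi n xs y \<Longrightarrow> set ys \<subseteq> set xs \<Longrightarrow> phi n ys y"
proof (induction n arbitrary: xs ys)
  case 0
  then show ?case by auto
next
  case (Suc n)
  have "set (ys @ [a]) \<subseteq> set (xs @ [a])" for a
    using Suc.prems(2) by auto
  with Suc show ?case
    by (subst (asm) phi.simps(2), subst phi.simps(2)) (meson subsetD)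
qed

lemma phi_notin: "phi n xs y \<Longrightarrow> y \<notin> set xs"
proof (induction n arbitrary: xs)
  case 0
  then show ?case by simp
next
  case (Suc n)
  show ?case
  proof
    assume "y \<in> set xs"
    with Suc.prems have "phi n (xs @ [y]) y"
      using phi_Suc_upD by blast
    with Suc.IH show False
      by fastforce
  qed
qed

lemma phi_Suc_imp: "phi (Suc n) xs y \<Longrightarrow> phi n xs y"
proof (induction n arbitrary: xs)
  case 0
  then show ?case using phi_notin[OF 0] by simp
next
  case (Suc n)
  from Suc.prems show ?case
    by (subst (asm) phi.simps(2), subst phi.simps(2)) (meson Suc.IH)
qed

lemma phi_le:
  assumes "phi n xs y" and "m \<le> n"
  shows "phi m xs y"
  using assms(2,1) by (induction rule: inc_induct) (blast dest: phi_Suc_imp)+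

definition prime_filter :: "'a::order set \<Rightarrow> bool" where
  "prime_filter F \<longleftrightarrow>
     (\<forall>a b. a \<in> F \<longrightarrow> a \<le> b \<longrightarrow> b \<in> F)
   \<and> (\<forall>a b c. a \<in> F \<longrightarrow> b \<in> F \<longrightarrow> M a b c \<longrightarrow> c \<in> F)
   \<and> (\<forall>a b c. c \<in> F \<longrightarrow> J a b c \<longrightarrow> a \<in> F \<or> b \<in> F)"

lemma prime_filter_up: "prime_filter F \<Longrightarrow> a \<in> F \<Longrightarrow> a \<le> b \<Longrightarrow> b \<in> F"
  unfolding prime_filter_def by blast

lemma prime_filter_meet: "prime_filter F \<Longrightarrow> a \<in> F \<Longrightarrow> b \<in> F \<Longrightarrow> M a b c \<Longrightarrow> c \<in> F"
  unfolding prime_filter_def by blast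

lemma prime_filter_join: "prime_filter F \<Longrightarrow> c \<in> F \<Longrightarrow> J a b c \<Longrightarrow> a \<in> F \<or> b \<in> F"
  unfolding prime_filter_def by blast

lemma prime_filter_phi: "prime_filter F \<Longrightarrow> set xs \<subseteq> F \<Longrightarrow> y \<notin> F \<Longrightarrow> phi n xs y"
proof (induction n arbitrary: xs)
  case 0
  then show ?case by auto
next
  case (Suc n)
  have "phi n (xs @ [a]) y" if "a \<in> F" for a
    using Suc that by simp
  with Suc.prems show ?case
    unfolding prime_filter_def by (subst phi.simps(2)) blast
qed

definition phi_consistent :: "'a::order \<Rightarrow> 'a set \<Rightarrow> bool" where
  "phi_consistent y G \<longleftrightarrow> (\<forall>xs n. set xs \<subseteq> G \<longrightarrow> phi n xs y)"

lemma phi_consistent_insert_iff: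
  "phi_consistent y (insert b G) \<longleftrightarrow> (\<forall>n ws. set ws \<subseteq> G \<longrightarrow> phi n (ws @ [b]) y)"
proof
  assume extend: "\<forall>n ws. set ws \<subseteq> G \<longrightarrow> phi n (ws @ [b]) y"
  show "phi_consistent y (insert b G)"
    unfolding phi_consistent_def
  proof (intro allI impI)
    fix xs n
    assume "set xs \<subseteq> insert b G"
    then have "set (filter (\<lambda>z. z \<noteq> b) xs) \<subseteq> G"
      by auto
    with extend have "phi n (filter (\<lambda>z. z \<noteq> b) xs @ [b]) y"
      by blast
    then show "phi n xs y"
      by (rule phi_subset) auto
  qed
next
  assume "phi_consistent y (insert b G)"
  moreover have "set (ws @ [b]) \<subseteq> insert b G" if "set ws \<subseteq> G" for ws
    using that by auto
  ultimately show "\<forall>n ws. set ws \<subseteq> G \<longrightarrow> phi n (ws @ [b]) y"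
    unfolding phi_consistent_def by blast
qed

context
  fixes y :: "'a::order" and G :: "'a set"
  assumes consistent: "phi_consistent y G"
    and maximal: "\<And>H. phi_consistent y H \<Longrightarrow> G \<subseteq> H \<Longrightarrow> H = G"
begin

lemma maximal_phi_consistent_phi: "set ws \<subseteq> G \<Longrightarrow> phi n ws y"
  using consistent by (simp add: phi_consistent_def)

lemma maximal_phi_consistent_mem_iff: "b \<in> G \<longleftrightarrow> (\<forall>n ws. set ws \<subseteq> G \<longrightarrow> phi n (ws @ [b]) y)"
proof
  assume "b \<in> G"
  then show "\<forall>n ws. set ws \<subseteq> G \<longrightarrow> phi n (ws @ [b]) y"
    by (simp add: maximal_phi_consistent_phi)
next
  assume "\<forall>n ws. set ws \<subseteq> G \<longrightarrow> phi n (ws @ [b]) y"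
  then have "insert b G = G"
    by (intro maximal) (auto simp: phi_consistent_insert_iff)
  then show "b \<in> G"
    by blast
qed

lemma maximal_phi_consistent_up:
  assumes "a \<in> G" and "a \<le> b"
  shows "b \<in> G"
  unfolding maximal_phi_consistent_mem_iff
proof (intro allI impI)
  fix n ws assume "set ws \<subseteq> G"
  with assms(1) have "phi (Suc n) (ws @ [a]) y"
    by (intro maximal_phi_consistent_phi) simp
  with assms(2) have "phi n (ws @ [a, b]) y"
    using phi_Suc_upD[of n "ws @ [a]" y a b] by simp
  then show "phi n (ws @ [b]) y"
    by (rule phi_subset) auto
qed

lemma maximal_phi_consistent_meet:
  assumes "a \<in> G" and "b \<in> G" and "M a b c"
  shows "c \<in> G"
  unfolding maximal_phi_consistent_mem_iff
proof (intro allI impI)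
  fix n ws assume "set ws \<subseteq> G"
  with assms(1,2) have "phi (Suc n) (ws @ [a, b]) y"
    by (intro maximal_phi_consistent_phi) simp
  with assms(3) have "phi n (ws @ [a, b, c]) y"
    using phi_Suc_meetD[of n "ws @ [a, b]" y a b c] by simp
  then show "phi n (ws @ [c]) y"
    by (rule phi_subset) auto
qed

lemma maximal_phi_consistent_join:
  assumes "c \<in> G" and "J a b c"
  shows "a \<in> G \<or> b \<in> G"
proof (rule ccontr)
  assume "\<not> (a \<in> G \<or> b \<in> G)"
  then obtain n\<^sub>a ws\<^sub>a n\<^sub>b ws\<^sub>b
    where ws: "set ws\<^sub>a \<subseteq> G" "set ws\<^sub>b \<subseteq> G"
      and fails: "\<not> phi n\<^sub>a (ws\<^sub>a @ [a]) y" "\<not> phi n\<^sub>b (ws\<^sub>b @ [b]) y"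
    unfolding maximal_phi_consistent_mem_iff by blast
  define n where "n = max n\<^sub>a n\<^sub>b"
  from ws assms(1) have "phi (Suc n) (ws\<^sub>a @ ws\<^sub>b @ [c]) y"
    by (intro maximal_phi_consistent_phi) simp
  with assms(2) have "phi n (ws\<^sub>a @ ws\<^sub>b @ [c, a]) y \<or> phi n (ws\<^sub>a @ ws\<^sub>b @ [c, b]) y"
    using phi_Suc_joinD[of n "ws\<^sub>a @ ws\<^sub>b @ [c]" y c a b] by simp
  moreover have "set (ws\<^sub>a @ [a]) \<subseteq> set (ws\<^sub>a @ ws\<^sub>b @ [c, a])"
    and "set (ws\<^sub>b @ [b]) \<subseteq> set (ws\<^sub>a @ ws\<^sub>b @ [c, b])"
    by auto
  ultimately have "phi n (ws\<^sub>a @ [a]) y \<or> phi n (ws\<^sub>b @ [b]) y"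
    by (meson phi_subset)
  with fails show False
    unfolding n_def by (meson phi_le max.cobounded1 max.cobounded2)
qed

lemma maximal_phi_consistent_prime_filter: "prime_filter G"
  unfolding prime_filter_def
  using maximal_phi_consistent_up maximal_phi_consistent_meet maximal_phi_consistent_join by blast

lemma maximal_phi_consistent_notin: "y \<notin> G"
  using maximal_phi_consistent_phi[of "[y]" 0] by auto

end

lemma prime_filter_separation:
  assumes "\<And>n. phi n [x] y"
  shows "\<exists>G. prime_filter G \<and> x \<in> G \<and> y \<notin> G"
proof -
  define \<C> where "\<C> = {G. x \<in> G \<and> phi_consistent y G}"
  have "\<exists>G\<in>\<C>. \<forall>H\<in>\<C>. G \<subseteq> H \<longrightarrow> H = G"
  proof (rule subset_Zorn_nonempty)
    have "phi_consistent y {x}"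
      unfolding phi_consistent_def using assms phi_subset[of _ "[x]"] by auto
    then show "\<C> \<noteq> {}"
      unfolding \<C>_def by blast
  next
    fix \<D> assume "\<D> \<noteq> {}" and chain: "subset.chain \<C> \<D>"
    have "phi n xs y" if xs: "set xs \<subseteq> \<Union>\<D>" for xs n
    proof -
      obtain G where "G \<in> \<D>" "set xs \<subseteq> G"
        using finite_subset_Union_chain[OF finite_set xs \<open>\<D> \<noteq> {}\<close> chain] by blast
      with chain show ?thesis
        unfolding \<C>_def phi_consistent_def subset_chain_def by blast
    qed
    with \<open>\<D> \<noteq> {}\<close> chain show "\<Union>\<D> \<in> \<C>"
      unfolding \<C>_def phi_consistent_def subset_chain_def by blast
  qed
  then obtain G where "x \<in> G" and "phi_consistent y G"
    and "\<And>H. phi_consistent y H \<Longrightarrow> G \<subseteq> H \<Longrightarrow> H = G"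
    unfolding \<C>_def by blast
  with maximal_phi_consistent_prime_filter maximal_phi_consistent_notin show ?thesis
    by blast
qed

lemma is_meet_pair_iff: "is_meet {a, b} c \<longleftrightarrow> M a b c"
  by (auto simp: is_meet_def M_def)

lemma is_join_pair_iff: "is_join {a, b} c \<longleftrightarrow> J a b c"
  by (auto simp: is_join_def J_def)

lemma card_less_3_cases:
  assumes "finite S" and "card S < 3"
  obtains "S = {}" | a b where "S = {a, b}" \<comment> \<open>\<open>a = b\<close> covers singletons\<close>
proof -
  consider "card S = 0" | "card S = 1" | "card S = 2"
    using assms(2) by linarith
  then show thesis
    using assms(1) that by cases (auto simp: card_1_singleton_iff card_2_iff)
qed

lemma card_pair_less_3: "card {a, b} < 3"
  by (simp add: card_insert_if)

lemma rep3_le_iff: "rep3 X h \<Longrightarrow> h p \<subseteq> h q \<longleftrightarrow> p \<le> q"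
  by (simp add: rep3_def)

lemma rep3_is_meet:
  "rep3 X h \<Longrightarrow> finite S \<Longrightarrow> card S < 3 \<Longrightarrow> is_meet S m \<Longrightarrow> h m = X \<inter> \<Inter>(h ` S)"
  unfolding rep3_def by blast

lemma rep3_is_join:
  "rep3 X h \<Longrightarrow> finite T \<Longrightarrow> card T < 3 \<Longrightarrow> is_join T j \<Longrightarrow> h j = \<Union>(h ` T)"
  unfolding rep3_def by blast

lemma rep3_meet:
  assumes "rep3 X h" and "M a b c"
  shows "h c = h a \<inter> h b"
proof -
  have "h c = X \<inter> \<Inter>(h ` {a, b})"
    using assms by (intro rep3_is_meet) (simp_all add: card_pair_less_3 is_meet_pair_iff)
  moreover have "h a \<subseteq> X"
    using assms(1) by (simp add: rep3_def)
  ultimately show ?thesis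
    by blast
qed

lemma rep3_join:
  assumes "rep3 X h" and "J a b c"
  shows "h c = h a \<union> h b"
proof -
  have "h c = \<Union>(h ` {a, b})"
    using assms by (intro rep3_is_join) (simp_all add: card_pair_less_3 is_join_pair_iff)
  then show ?thesis
    by simp
qed

lemma rep3_point_prime_filter:
  assumes "rep3 X h"
  shows "prime_filter {z. p \<in> h z}"
  unfolding prime_filter_def
proof (intro conjI allI impI)
  fix a b c
  show "b \<in> {z. p \<in> h z}" if "a \<in> {z. p \<in> h z}" "a \<le> b"
    using that rep3_le_iff[OF assms, of a b] by blast
  show "c \<in> {z. p \<in> h z}" if "a \<in> {z. p \<in> h z}" "b \<in> {z. p \<in> h z}" "M a b c"
    using that rep3_meet[OF assms] by simp
  show "a \<in> {z. p \<in> h z} \<or> b \<in> {z. p \<in> h z}" if "c \<in> {z. p \<in> h z}" "J a b c"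
    using that rep3_join[OF assms] by simp
qed

lemma rep3_imp_psi:
  fixes h :: "'a::order \<Rightarrow> 'b set"
  assumes "rep3 X h"
  shows "psi n (P :: 'a itself)"
  unfolding psi_def
proof (intro allI impI)
  fix x y :: 'a
  assume "\<not> x \<le> y"
  then obtain p where "p \<in> h x" "p \<notin> h y"
    using rep3_le_iff[OF assms] by blast
  with rep3_point_prime_filter[OF assms, of p] show "phi n [x] y"
    by (intro prime_filter_phi[of "{z. p \<in> h z}"]) simp_all
qed

definition proper_prime_filters :: "'a::order set set" where
  "proper_prime_filters = {G. prime_filter G \<and> G \<noteq> {} \<and> G \<noteq> UNIV}"

definition proper_prime_filters_containing :: "'a::order \<Rightarrow> 'a set set" where
  "proper_prime_filters_containing p = {G \<in> proper_prime_filters. p \<in> G}"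

lemma proper_prime_filters_containing_mono:
  "p \<le> q \<Longrightarrow> proper_prime_filters_containing p \<subseteq> proper_prime_filters_containing q"
  using prime_filter_up
  by (auto simp: proper_prime_filters_containing_def proper_prime_filters_def)

lemma proper_prime_filters_containing_is_meet:
  assumes "finite S" and "card S < 3" and "is_meet S m"
  shows "proper_prime_filters_containing m
           = proper_prime_filters \<inter> \<Inter>(proper_prime_filters_containing ` S)"
  using card_less_3_cases[OF assms(1,2)]
proof cases
  case 1
  with assms(3) have "w \<le> m" for w
    by (simp add: is_meet_def)
  then have "m \<in> G" if "G \<in> proper_prime_filters" for G
    using that prime_filter_up by (fastforce simp: proper_prime_filters_def)
  with 1 show ?thesis
    by (auto simp: proper_prime_filters_containing_def)
next
  case (2 a b)
  with assms(3) have "M a b m"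
    by (simp add: is_meet_pair_iff)
  then have "m \<in> G \<longleftrightarrow> a \<in> G \<and> b \<in> G" if "G \<in> proper_prime_filters" for G
    using that prime_filter_up prime_filter_meet
    unfolding proper_prime_filters_def M_def by blast
  with 2 show ?thesis
    by (auto simp: proper_prime_filters_containing_def)
qed

lemma proper_prime_filters_containing_is_join:
  assumes "finite T" and "card T < 3" and "is_join T j"
  shows "proper_prime_filters_containing j = \<Union>(proper_prime_filters_containing ` T)"
  using card_less_3_cases[OF assms(1,2)]
proof cases
  case 1
  with assms(3) have "j \<le> w" for w
    by (simp add: is_join_def)
  then have "j \<notin> G" if "G \<in> proper_prime_filters" for G
    using that prime_filter_up by (fastforce simp: proper_prime_filters_def)
  with 1 show ?thesis
    by (auto simp: proper_prime_filters_containing_def)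
next
  case (2 a b)
  with assms(3) have "J a b j"
    by (simp add: is_join_pair_iff)
  then have "j \<in> G \<longleftrightarrow> a \<in> G \<or> b \<in> G" if "G \<in> proper_prime_filters" for G
    using that prime_filter_up prime_filter_join
    unfolding proper_prime_filters_def J_def by blast
  with 2 show ?thesis
    by (auto simp: proper_prime_filters_containing_def)
qed

lemma rep3_proper_prime_filters:
  assumes separation: "\<And>x y :: 'a::order. \<not> x \<le> y \<Longrightarrow> \<exists>G. prime_filter G \<and> x \<in> G \<and> y \<notin> G"
  shows "rep3 (proper_prime_filters :: 'a set set) proper_prime_filters_containing"
proof -
  have "p \<le> q" if "proper_prime_filters_containing p \<subseteq> proper_prime_filters_containing q"
    for p q :: 'a
  proof (rule ccontr)
    assume "\<not> p \<le> q"
    then obtain G where "prime_filter G" "p \<in> G" "q \<notin> G"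
      using separation by blast
    then have "G \<in> proper_prime_filters_containing p - proper_prime_filters_containing q"
      by (auto simp: proper_prime_filters_containing_def proper_prime_filters_def)
    with that show False
      by blast
  qed
  then have "proper_prime_filters_containing p \<subseteq> proper_prime_filters_containing q \<longleftrightarrow> p \<le> q"
    for p q :: 'a
    using proper_prime_filters_containing_mono by blast
  moreover have "proper_prime_filters_containing p \<subseteq> proper_prime_filters" for p :: 'a
    by (auto simp: proper_prime_filters_containing_def)
  ultimately show ?thesis
    unfolding rep3_def
    by (simp add: proper_prime_filters_containing_is_meet proper_prime_filters_containing_is_join)
qed

theorem theorem4p3:
  fixes P :: "('a::order) itself"
  shows "((\<exists>(X::'b set) (h::'a \<Rightarrow> 'b set). rep3 X h) \<longrightarrow> (\<forall>n. psi n P))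
       \<and> ((\<forall>n. psi n P) \<longrightarrow> (\<exists>(X::'a set set) (h::'a \<Rightarrow> 'a set set). rep3 X h))"
proof (intro conjI impI)
  assume "\<exists>(X::'b set) (h::'a \<Rightarrow> 'b set). rep3 X h"
  then show "\<forall>n. psi n P"
    using rep3_imp_psi by blast
next
  assume "\<forall>n. psi n P"
  then have "\<exists>G. prime_filter G \<and> x \<in> G \<and> y \<notin> G" if "\<not> x \<le> y" for x y :: 'a
    using that by (intro prime_filter_separation) (simp add: psi_def)
  from rep3_proper_prime_filters[OF this]
  show "\<exists>(X::'a set set) (h::'a \<Rightarrow> 'a set set). rep3 X h"
    by blast
qed

end
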